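(* There exists a class $\mathcal{J}$ (a formula with one free variable in the language $\{e,\vdash,\circ\}$) such that $\mathsf{Seq}\vdash\phi^{\mathcal{J}}$ for every axiom $\phi$ of $\mathsf{Seq}^*$. Furthermore, writing $x\preceq y$ for $\exists z\in\mathcal{J}\,[y=x\circ z]$, the theory $\mathsf{Seq}$ proves that $\preceq$ is reflexive and transitive, that $\forall y\in\mathcal{J}\,\forall x\,[x\preceq y\rightarrow x\in\mathcal{J}]$, and that $\forall w\,[e\vdash w\in\mathcal{J}]$.
   Context: $\mathsf{Seq}$ is the theory in the language $\{e,\vdash,\circ\}$ ($e$ constant, $\vdash$ and $\circ$ binary functions) with axioms: ($\mathsf{Seq}_1$) $\forall xy[x\vdash y\neq e]$; ($\mathsf{Seq}_2$) $\forall x_1x_2y_1y_2[x_1\vdash x_2=y_1\vdash y_2\rightarrow(x_1=y_1\wedge x_2=y_2)]$; ($\mathsf{Seq}_3$) $\forall x[x\circ e=x]$; ($\mathsf{Seq}_4$) $\forall xyz[x\circ(y\vdash z)=(x\circ y)\vdash z]$; ($\mathsf{Seq}_5$) $\forall x[x=e\vee\exists yz[x=y\vdash z]]$. $\mathsf{Seq}^*$ is the theory with axioms $\mathsf{Seq}_1$, $\mathsf{Seq}_2$, $\mathsf{Seq}_4$ and ($\mathsf{Seq}^*_3$) $\forall x[x\circ e=x\wedge e\circ x=x]$, ($\mathsf{Seq}^*_5$) $\forall xyzw[x\circ y=z\circ w\leftrightarrow\exists u[(z=x\circ u\wedge u\circ w=y)\vee(x=z\circ u\wedge u\circ y=w)]]$.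 For a class $K$ and formula $\phi$, the relativization $\phi^K$ is defined by: $\phi^K=\phi$ for atomic $\phi$, commuting with propositional connectives, $(\forall x\phi)^K=\forall x[K(x)\rightarrow\phi^K]$, $(\exists x\phi)^K=\exists x[K(x)\wedge\phi^K]$. $x\in K$ means $K(x)$. *)

theory Defs
  imports Main
begin

datatype tm = Var nat | E | Pr tm tm (* x \<turnstile> y *) | Cm tm tm (* x \<circ> y *)

datatype fm = Eq tm tm | FF | Neg fm | And fm fm | Or fm fm | Imp fm fm | Iff fm fm
  | All fm | Ex fm

fun fv_tm :: "tm \<Rightarrow> nat set" where
  "fv_tm (Var n) = {n}"
| "fv_tm E = {}"
| "fv_tm (Pr s t) = fv_tm s \<union> fv_tm t"
| "fv_tm (Cm s t) = fv_tm s \<union> fv_tm t"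

fun fv :: "fm \<Rightarrow> nat set" where
  "fv (Eq s t) = fv_tm s \<union> fv_tm t"
| "fv FF = {}"
| "fv (Neg p) = fv p"
| "fv (And p q) = fv p \<union> fv q"
| "fv (Or p q) = fv p \<union> fv q"
| "fv (Imp p q) = fv p \<union> fv q"
| "fv (Iff p q) = fv p \<union> fv q"
| "fv (All p) = (\<lambda>n. n - 1) ` (fv p - {0})"
| "fv (Ex p) = (\<lambda>n. n - 1) ` (fv p - {0})"

fun lift_tm :: "tm \<Rightarrow> tm" where
  "lift_tm (Var n) = Var (Suc n)"
| "lift_tm E = E"
| "lift_tm (Pr s t) = Pr (lift_tm s) (lift_tm t)"
| "lift_tm (Cm s t) = Cm (lift_tm s) (lift_tm t)"

fun eval_tm :: "'a \<Rightarrow> ('a \<Rightarrow> 'a \<Rightarrow> 'a) \<Rightarrow> ('a \<Rightarrow> 'a \<Rightarrow> 'a) \<Rightarrow> (nat \<Rightarrow> 'a) \<Rightarrow> tm \<Rightarrow> 'a" where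
  "eval_tm e pr cm env (Var n) = env n"
| "eval_tm e pr cm env E = e"
| "eval_tm e pr cm env (Pr s t) = pr (eval_tm e pr cm env s) (eval_tm e pr cm env t)"
| "eval_tm e pr cm env (Cm s t) = cm (eval_tm e pr cm env s) (eval_tm e pr cm env t)"

fun eval :: "'a \<Rightarrow> ('a \<Rightarrow> 'a \<Rightarrow> 'a) \<Rightarrow> ('a \<Rightarrow> 'a \<Rightarrow> 'a) \<Rightarrow> (nat \<Rightarrow> 'a) \<Rightarrow> fm \<Rightarrow> bool" where
  "eval e pr cm env (Eq s t) = (eval_tm e pr cm env s = eval_tm e pr cm env t)"
| "eval e pr cm env FF = False"
| "eval e pr cm env (Neg p) = (\<not> eval e pr cm env p)"
| "eval e pr cm env (And p q) = (eval e pr cm env p \<and> eval e pr cm env q)"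
| "eval e pr cm env (Or p q) = (eval e pr cm env p \<or> eval e pr cm env q)"
| "eval e pr cm env (Imp p q) = (eval e pr cm env p \<longrightarrow> eval e pr cm env q)"
| "eval e pr cm env (Iff p q) = (eval e pr cm env p \<longleftrightarrow> eval e pr cm env q)"
| "eval e pr cm env (All p) = (\<forall>a. eval e pr cm (case_nat a env) p)"
| "eval e pr cm env (Ex p) = (\<exists>a. eval e pr cm (case_nat a env) p)"

definition Seq1 :: fm where "Seq1 = All (All (Neg (Eq (Pr (Var 1) (Var 0)) E)))"
definition Seq2 :: fm where "Seq2 = All (All (All (All
   (Imp (Eq (Pr (Var 3) (Var 2)) (Pr (Var 1) (Var 0)))
        (And (Eq (Var 3) (Var 1)) (Eq (Var 2) (Var 0)))))))"
definition Seq3 :: fm where "Seq3 = All (Eq (Cm (Var 0) E) (Var 0))"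
definition Seq4 :: fm where "Seq4 = All (All (All
   (Eq (Cm (Var 2) (Pr (Var 1) (Var 0))) (Pr (Cm (Var 2) (Var 1)) (Var 0)))))"
definition Seq5 :: fm where "Seq5 = All (Or (Eq (Var 0) E) (Ex (Ex (Eq (Var 2) (Pr (Var 1) (Var 0))))))"
definition Seq3s :: fm where "Seq3s = All (And (Eq (Cm (Var 0) E) (Var 0)) (Eq (Cm E (Var 0)) (Var 0)))"
definition Seq5s :: fm where "Seq5s = All (All (All (All
   (Iff (Eq (Cm (Var 3) (Var 2)) (Cm (Var 1) (Var 0)))
        (Ex (Or (And (Eq (Var 2) (Cm (Var 4) (Var 0))) (Eq (Cm (Var 0) (Var 1)) (Var 3)))
                (And (Eq (Var 4) (Cm (Var 2) (Var 0))) (Eq (Cm (Var 0) (Var 3)) (Var 1)))))))))"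

definition Seq_axioms :: "fm set" where "Seq_axioms = {Seq1, Seq2, Seq3, Seq4, Seq5}"
definition Seq_star_axioms :: "fm set" where "Seq_star_axioms = {Seq1, Seq2, Seq3s, Seq4, Seq5s}"

text \<open>Seq proves phi, rendered semantically (via the completeness theorem and
  downward Loewenheim-Skolem for this countable language): phi holds under every
  assignment in every countable model of Seq. All models of Seq are infinite, so
  every countable model is isomorphic to one with universe nat.\<close>
definition Seq_proves :: "fm \<Rightarrow> bool" where
  "Seq_proves p \<longleftrightarrow> (\<forall>(e::nat) pr cm.
      (\<forall>ax\<in>Seq_axioms. \<forall>env. eval e pr cm env ax) \<longrightarrow> (\<forall>env. eval e pr cm env p))"

section \<open>Relativization to a class J (a formula whose only free variable is 0)\<close>

fun rel :: "fm \<Rightarrow> fm \<Rightarrow> fm" where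
  "rel J (Eq s t) = Eq s t"
| "rel J FF = FF"
| "rel J (Neg p) = Neg (rel J p)"
| "rel J (And p q) = And (rel J p) (rel J q)"
| "rel J (Or p q) = Or (rel J p) (rel J q)"
| "rel J (Imp p q) = Imp (rel J p) (rel J q)"
| "rel J (Iff p q) = Iff (rel J p) (rel J q)"
| "rel J (All p) = All (Imp J (rel J p))"
| "rel J (Ex p) = Ex (And J (rel J p))"

definition mem :: "fm \<Rightarrow> tm \<Rightarrow> fm" where
  "mem J t = Ex (And (Eq (Var 0) (lift_tm t)) J)"

definition prec :: "fm \<Rightarrow> tm \<Rightarrow> tm \<Rightarrow> fm" where
  "prec J x y = Ex (And (mem J (Var 0)) (Eq (lift_tm y) (Cm (lift_tm x) (Var 0))))"

definition prec_refl :: "fm \<Rightarrow> fm" where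
  "prec_refl J = All (prec J (Var 0) (Var 0))"
definition prec_trans :: "fm \<Rightarrow> fm" where
  "prec_trans J = All (All (All
     (Imp (And (prec J (Var 2) (Var 1)) (prec J (Var 1) (Var 0))) (prec J (Var 2) (Var 0)))))"
definition J_down_closed :: "fm \<Rightarrow> fm" where
  "J_down_closed J = All (Imp J (All (Imp (prec J (Var 0) (Var 1)) (mem J (Var 0)))))"
definition J_pair :: "fm \<Rightarrow> fm" where
  "J_pair J = All (mem J (Pr E (Var 0)))"

end

theory Submission
  imports Defs
begin

text \<open>\<open>J\<close> is the class of \<open>x\<close> for which associativity \<open>(y \<circ> z) \<circ> x = y \<circ> (z \<circ> x)\<close>,
  the left unit law \<open>e \<circ> x = x\<close>, right cancellation and the splitting property of
  \<open>Seq\<^sup>*\<^sub>5\<close> hold with \<open>x\<close> in the rightmost position (splitting being required only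
  for associative arguments). These properties pass from \<open>x\<close> to \<open>x \<turnstile> a\<close> by the
  axioms of \<open>Seq\<close> (splitting by the case distinction \<open>Seq\<^sub>5\<close> on the second argument),
  and from \<open>x\<close> and \<open>y\<close> to \<open>x \<circ> y\<close> by associativity; so \<open>J\<close> contains every
  \<open>e \<turnstile> w\<close> and is closed under \<open>\<circ>\<close>, which makes \<open>\<preceq>\<close> transitive. Cancelling a
  right factor \<open>z \<in> J\<close> transfers all four properties from \<open>x \<circ> z\<close> back to \<open>x\<close>;
  this gives downward closure and puts the witness of \<open>Seq\<^sup>*\<^sub>5\<close> into \<open>J\<close>.\<close>

context
  fixes e :: 'a and cm :: "'a \<Rightarrow> 'a \<Rightarrow> 'a" (infixl "\<cdot>" 70)
begin

definition right_assoc :: "'a \<Rightarrow> bool" where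
  "right_assoc x \<longleftrightarrow> (\<forall>y z. (y \<cdot> z) \<cdot> x = y \<cdot> (z \<cdot> x))"

definition right_cancel :: "'a \<Rightarrow> bool" where
  "right_cancel x \<longleftrightarrow> (\<forall>a b. a \<cdot> x = b \<cdot> x \<longrightarrow> a = b)"

definition right_split :: "'a \<Rightarrow> bool" where
  "right_split x \<longleftrightarrow> (\<forall>p q r. right_assoc p \<and> right_assoc q \<and> right_assoc r \<and> p \<cdot> q = r \<cdot> x \<longrightarrow>
     (\<exists>u. right_assoc u \<and> ((r = p \<cdot> u \<and> u \<cdot> x = q) \<or> (p = r \<cdot> u \<and> u \<cdot> q = x))))"

definition J_sem :: "'a \<Rightarrow> bool" where
  "J_sem x \<longleftrightarrow> right_assoc x \<and> e \<cdot> x = x \<and> right_cancel x \<and> right_split x"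

lemma right_assocD: "right_assoc x \<Longrightarrow> (y \<cdot> z) \<cdot> x = y \<cdot> (z \<cdot> x)"
  by (simp add: right_assoc_def)

lemma right_cancelD: "right_cancel x \<Longrightarrow> a \<cdot> x = b \<cdot> x \<Longrightarrow> a = b"
  by (simp add: right_cancel_def)

lemma right_splitD:
  assumes "right_split x" "right_assoc p" "right_assoc q" "right_assoc r" "p \<cdot> q = r \<cdot> x"
  obtains u where "right_assoc u" "r = p \<cdot> u \<and> u \<cdot> x = q \<or> p = r \<cdot> u \<and> u \<cdot> q = x"
  using assms unfolding right_split_def by blast

lemma right_assoc_cm: "right_assoc x \<Longrightarrow> right_assoc y \<Longrightarrow> right_assoc (x \<cdot> y)"
  unfolding right_assoc_def by metis

lemma right_cancel_cm:
  "right_assoc y \<Longrightarrow> right_cancel x \<Longrightarrow> right_cancel y \<Longrightarrow> right_cancel (x \<cdot> y)"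
  unfolding right_cancel_def right_assoc_def by metis

lemma right_split_cm:
  assumes A1: "right_assoc x1" and A2: "right_assoc x2"
    and P1: "right_split x1" and P2: "right_split x2"
  shows "right_split (x1 \<cdot> x2)"
  unfolding right_split_def
proof (intro allI impI)
  fix p q r
  assume h: "right_assoc p \<and> right_assoc q \<and> right_assoc r \<and> p \<cdot> q = r \<cdot> (x1 \<cdot> x2)"
  then have "p \<cdot> q = (r \<cdot> x1) \<cdot> x2" and "right_assoc (r \<cdot> x1)"
    using A1 A2 right_assoc_cm by (simp_all add: right_assocD)
  with h P2 obtain u where u: "right_assoc u"
    "(r \<cdot> x1 = p \<cdot> u \<and> u \<cdot> x2 = q) \<or> (p = (r \<cdot> x1) \<cdot> u \<and> u \<cdot> q = x2)"
    by (blast elim: right_splitD)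
  from u(2) show "\<exists>t. right_assoc t \<and>
      ((r = p \<cdot> t \<and> t \<cdot> (x1 \<cdot> x2) = q) \<or> (p = r \<cdot> t \<and> t \<cdot> q = x1 \<cdot> x2))"
  proof
    assume c: "r \<cdot> x1 = p \<cdot> u \<and> u \<cdot> x2 = q"
    with h P1 u(1) obtain t where t: "right_assoc t"
      "(r = p \<cdot> t \<and> t \<cdot> x1 = u) \<or> (p = r \<cdot> t \<and> t \<cdot> u = x1)"
      by (metis right_splitD)
    then show ?thesis
      using c right_assocD[OF A2, of t x1] right_assocD[OF A2, of t u] by auto
  next
    assume c: "p = (r \<cdot> x1) \<cdot> u \<and> u \<cdot> q = x2"
    then have "p = r \<cdot> (x1 \<cdot> u)" and "(x1 \<cdot> u) \<cdot> q = x1 \<cdot> x2"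
      using h u(1) by (metis right_assocD)+
    then show ?thesis using A1 u(1) right_assoc_cm by blast
  qed
qed

lemma J_sem_cm: "J_sem x \<Longrightarrow> J_sem y \<Longrightarrow> J_sem (x \<cdot> y)"
  unfolding J_sem_def
  by (metis right_assoc_cm right_cancel_cm right_split_cm right_assocD)

lemma J_sem_left_factor:
  assumes J: "J_sem (t \<cdot> z)" and Jz: "J_sem z"
  shows "J_sem t"
proof -
  have A: "right_assoc (t \<cdot> z)" and L: "e \<cdot> (t \<cdot> z) = t \<cdot> z"
    and R: "right_cancel (t \<cdot> z)" and P: "right_split (t \<cdot> z)"
    using J by (simp_all add: J_sem_def)
  have Az: "right_assoc z" and Rz: "right_cancel z"
    using Jz by (simp_all add: J_sem_def)
  note assoc_z = right_assocD[OF Az] and cancel_z = right_cancelD[OF Rz]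
  have "right_assoc t"
    unfolding right_assoc_def using assoc_z right_assocD[OF A] cancel_z by metis
  moreover have "e \<cdot> t = t"
    using L assoc_z cancel_z by metis
  moreover have "right_cancel t"
    using R assoc_z unfolding right_cancel_def by metis
  moreover have "right_split t"
    unfolding right_split_def
  proof (intro allI impI)
    fix p q r
    assume h: "right_assoc p \<and> right_assoc q \<and> right_assoc r \<and> p \<cdot> q = r \<cdot> t"
    then have "p \<cdot> (q \<cdot> z) = r \<cdot> (t \<cdot> z)" and "right_assoc (q \<cdot> z)"
      using assoc_z Az right_assoc_cm by metis+
    with h P obtain u where "right_assoc u"
      "(r = p \<cdot> u \<and> u \<cdot> (t \<cdot> z) = q \<cdot> z) \<or> (p = r \<cdot> u \<and> u \<cdot> (q \<cdot> z) = t \<cdot> z)"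
      by (blast elim: right_splitD)
    then show "\<exists>u. right_assoc u \<and> ((r = p \<cdot> u \<and> u \<cdot> t = q) \<or> (p = r \<cdot> u \<and> u \<cdot> q = t))"
      using assoc_z cancel_z by metis
  qed
  ultimately show ?thesis by (simp add: J_sem_def)
qed

lemma cm_eq_cm_iff_split:
  assumes "J_sem x" "J_sem y" "J_sem z" "J_sem w"
  shows "x \<cdot> y = z \<cdot> w \<longleftrightarrow>
    (\<exists>u. J_sem u \<and> ((z = x \<cdot> u \<and> u \<cdot> w = y) \<or> (x = z \<cdot> u \<and> u \<cdot> y = w)))"
proof
  assume "x \<cdot> y = z \<cdot> w"
  with assms obtain u where "right_assoc u" "(z = x \<cdot> u \<and> u \<cdot> w = y) \<or> (x = z \<cdot> u \<and> u \<cdot> y = w)"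
    unfolding J_sem_def by (blast elim: right_splitD)
  then show "\<exists>u. J_sem u \<and> ((z = x \<cdot> u \<and> u \<cdot> w = y) \<or> (x = z \<cdot> u \<and> u \<cdot> y = w))"
    using J_sem_left_factor assms by metis
next
  assume "\<exists>u. J_sem u \<and> ((z = x \<cdot> u \<and> u \<cdot> w = y) \<or> (x = z \<cdot> u \<and> u \<cdot> y = w))"
  then show "x \<cdot> y = z \<cdot> w"
    using assms unfolding J_sem_def by (metis right_assocD)
qed

end

locale seq_model =
  fixes e :: 'a and pr :: "'a \<Rightarrow> 'a \<Rightarrow> 'a" and cm :: "'a \<Rightarrow> 'a \<Rightarrow> 'a" (infixl "\<cdot>" 70)
  assumes pr_neq_e: "pr x y \<noteq> e"
    and pr_inject: "pr x1 x2 = pr y1 y2 \<Longrightarrow> x1 = y1 \<and> x2 = y2"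
    and cm_e: "x \<cdot> e = x"
    and cm_pr: "x \<cdot> pr y z = pr (x \<cdot> y) z"
    and e_or_pr: "x = e \<or> (\<exists>y z. x = pr y z)"
begin

lemma J_sem_e: "J_sem e (\<cdot>) e"
  unfolding J_sem_def right_split_def by (auto simp: right_assoc_def right_cancel_def cm_e)

lemma right_assoc_pr_iff: "right_assoc (\<cdot>) (pr x a) \<longleftrightarrow> right_assoc (\<cdot>) x"
  unfolding right_assoc_def by (metis pr_inject cm_pr)

lemma right_cancel_pr: "right_cancel (\<cdot>) x \<Longrightarrow> right_cancel (\<cdot>) (pr x a)"
  unfolding right_cancel_def by (metis pr_inject cm_pr)

lemma right_split_pr:
  assumes Ax: "right_assoc (\<cdot>) x" and Px: "right_split (\<cdot>) x"
  shows "right_split (\<cdot>) (pr x a)"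
  unfolding right_split_def
proof (intro allI impI)
  fix p q r
  assume h: "right_assoc (\<cdot>) p \<and> right_assoc (\<cdot>) q \<and> right_assoc (\<cdot>) r \<and> p \<cdot> q = r \<cdot> pr x a"
  show "\<exists>u. right_assoc (\<cdot>) u \<and> ((r = p \<cdot> u \<and> u \<cdot> pr x a = q) \<or> (p = r \<cdot> u \<and> u \<cdot> q = pr x a))"
  proof (cases "q = e")
    case True
    with h Ax show ?thesis
      by (intro exI[of _ "pr x a"]) (simp add: right_assoc_pr_iff cm_e)
  next
    case False
    then obtain q' b where q: "q = pr q' b" using e_or_pr by blast
    with h have "pr (p \<cdot> q') b = pr (r \<cdot> x) a"
      by (simp add: cm_pr)
    then have "p \<cdot> q' = r \<cdot> x" and "b = a"
      by (blast dest: pr_inject)+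
    moreover have "right_assoc (\<cdot>) q'"
      using h q right_assoc_pr_iff by blast
    ultimately obtain u where "right_assoc (\<cdot>) u"
      "(r = p \<cdot> u \<and> u \<cdot> x = q') \<or> (p = r \<cdot> u \<and> u \<cdot> q' = x)"
      using h Px by (blast elim: right_splitD)
    then show ?thesis using q \<open>b = a\<close> by (auto simp: cm_pr)
  qed
qed

lemma J_sem_pr: "J_sem e (\<cdot>) x \<Longrightarrow> J_sem e (\<cdot>) (pr x a)"
  unfolding J_sem_def
  by (simp add: right_assoc_pr_iff right_cancel_pr right_split_pr cm_pr)

end

definition assoc_fm :: "nat \<Rightarrow> fm" where
  "assoc_fm k = All (All (Eq (Cm (Cm (Var 1) (Var 0)) (Var (k + 2)))
                             (Cm (Var 1) (Cm (Var 0) (Var (k + 2))))))"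

definition J_fm :: fm where
  "J_fm = And (And (And (assoc_fm 0) (Eq (Cm E (Var 0)) (Var 0)))
     (All (All (Imp (Eq (Cm (Var 1) (Var 2)) (Cm (Var 0) (Var 2))) (Eq (Var 1) (Var 0))))))
     (All (All (All (Imp (And (And (And (assoc_fm 2) (assoc_fm 1)) (assoc_fm 0))
                              (Eq (Cm (Var 2) (Var 1)) (Cm (Var 0) (Var 3))))
       (Ex (And (assoc_fm 0)
          (Or (And (Eq (Var 1) (Cm (Var 3) (Var 0))) (Eq (Cm (Var 0) (Var 4)) (Var 2)))
              (And (Eq (Var 3) (Cm (Var 1) (Var 0))) (Eq (Cm (Var 0) (Var 2)) (Var 4))))))))))"

lemma fv_J_fm: "fv J_fm \<subseteq> {0}"
  by (auto simp: J_fm_def assoc_fm_def)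

lemma eval_assoc_fm [simp]: "eval e pr cm env (assoc_fm k) = right_assoc cm (env k)"
  by (simp add: assoc_fm_def right_assoc_def)

lemma eval_J_fm [simp]: "eval e pr cm env J_fm = J_sem e cm (env 0)"
  by (simp add: J_fm_def J_sem_def right_cancel_def right_split_def)

lemma eval_lift_tm [simp]: "eval_tm e pr cm (case_nat a env) (lift_tm t) = eval_tm e pr cm env t"
  by (induction t) auto

lemma eval_mem [simp]:
  "eval e pr cm env (mem J t) = eval e pr cm (case_nat (eval_tm e pr cm env t) env) J"
  by (simp add: mem_def)

context seq_model
begin

lemma eval_rel_J_fm_Seq_star_axiom:
  assumes "\<phi> \<in> Seq_star_axioms"
  shows "eval e pr (\<cdot>) env (rel J_fm \<phi>)"
proof -
  have "eval e pr (\<cdot>) env (rel J_fm Seq1)"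
    by (simp add: Seq1_def pr_neq_e)
  moreover have "eval e pr (\<cdot>) env (rel J_fm Seq2)"
    by (simp add: Seq2_def) (blast dest: pr_inject)
  moreover have "eval e pr (\<cdot>) env (rel J_fm Seq3s)"
    by (simp add: Seq3s_def J_sem_def cm_e)
  moreover have "eval e pr (\<cdot>) env (rel J_fm Seq4)"
    by (simp add: Seq4_def cm_pr)
  moreover have "eval e pr (\<cdot>) env (rel J_fm Seq5s)"
    by (simp add: Seq5s_def cm_eq_cm_iff_split)
  ultimately show ?thesis
    using assms unfolding Seq_star_axioms_def by blast
qed

lemma eval_prec_refl_J_fm: "eval e pr (\<cdot>) env (prec_refl J_fm)"
  by (simp add: prec_refl_def prec_def) (metis J_sem_e cm_e)

lemma eval_prec_trans_J_fm: "eval e pr (\<cdot>) env (prec_trans J_fm)"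
proof -
  have "\<exists>z. J_sem e (\<cdot>) z \<and> x \<cdot> z1 \<cdot> z2 = x \<cdot> z"
    if "J_sem e (\<cdot>) z1" "J_sem e (\<cdot>) z2" for x z1 z2
    using that J_sem_cm by (metis J_sem_def right_assocD)
  then show ?thesis by (auto simp: prec_trans_def prec_def)
qed

lemma eval_J_down_closed_J_fm: "eval e pr (\<cdot>) env (J_down_closed J_fm)"
  by (simp add: J_down_closed_def prec_def) (blast intro: J_sem_left_factor)

lemma eval_J_pair_J_fm: "eval e pr (\<cdot>) env (J_pair J_fm)"
  by (simp add: J_pair_def J_sem_pr J_sem_e)

end

lemma seq_model_if_Seq_axioms:
  assumes "\<forall>ax\<in>Seq_axioms. \<forall>env. eval e pr cm env ax"
  shows "seq_model e pr cm"
proof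
  have ax: "eval e pr cm (\<lambda>_. e) ax" if "ax \<in> Seq_axioms" for ax
    using assms that by blast
  \<comment> \<open>Kept apart: as a hypothesis, \<open>Seq\<^sub>2\<close> makes the simplifier loop.\<close>
  have eval_Seq2: "eval e pr cm env Seq2 \<longleftrightarrow> (\<forall>a b c d. pr a b = pr c d \<longrightarrow> a = c \<and> b = d)" for env
    by (simp add: Seq2_def)
  show "pr x y \<noteq> e" for x y
    using ax[of Seq1] by (simp add: Seq_axioms_def Seq1_def)
  show "pr x1 x2 = pr y1 y2 \<Longrightarrow> x1 = y1 \<and> x2 = y2" for x1 x2 y1 y2
    using ax[of Seq2] unfolding Seq_axioms_def eval_Seq2 by blast
  show "cm x e = x" for x
    using ax[of Seq3] by (simp add: Seq_axioms_def Seq3_def)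
  show "cm x (pr y z) = pr (cm x y) z" for x y z
    using ax[of Seq4] by (simp add: Seq_axioms_def Seq4_def)
  show "x = e \<or> (\<exists>y z. x = pr y z)" for x
    using ax[of Seq5] by (simp add: Seq_axioms_def Seq5_def)
qed

lemma Seq_provesI:
  assumes "\<And>(e :: nat) pr cm env. seq_model e pr cm \<Longrightarrow> eval e pr cm env \<phi>"
  shows "Seq_proves \<phi>"
  unfolding Seq_proves_def
proof (intro allI impI)
  fix e :: nat and pr cm env
  assume "\<forall>ax\<in>Seq_axioms. \<forall>env. eval e pr cm env ax"
  then show "eval e pr cm env \<phi>" by (intro assms seq_model_if_Seq_axioms)
qed

theorem lemma5:
  shows "\<exists>J. fv J \<subseteq> {0}
    \<and> (\<forall>\<phi>\<in>Seq_star_axioms. Seq_proves (rel J \<phi>))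
    \<and> Seq_proves (prec_refl J)
    \<and> Seq_proves (prec_trans J)
    \<and> Seq_proves (J_down_closed J)
    \<and> Seq_proves (J_pair J)"
proof (intro exI[of _ J_fm] conjI ballI Seq_provesI)
  show "fv J_fm \<subseteq> {0}" by (rule fv_J_fm)
qed (simp_all add: seq_model.eval_rel_J_fm_Seq_star_axiom seq_model.eval_prec_refl_J_fm
       seq_model.eval_prec_trans_J_fm seq_model.eval_J_down_closed_J_fm
       seq_model.eval_J_pair_J_fm)

end
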